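(* Let $N\ge 2$, fix real $\Omega\neq 0$ and real $\delta$, and let $J^{(1)}=(J^{(1)}_{i,j})_{1\le i<j\le N}$ and $J^{(2)}=(J^{(2)}_{i,j})_{1\le i<j\le N}$ be real coupling families with $J^{(1)}\neq J^{(2)}$. For $k=1,2$ let $$\hat{H}_k = \Omega \sum_{i=1}^N \hat{\sigma}_i^x + \delta \sum_{i=1}^N \hat{\sigma}_i^z + \sum_{1\le i<j\le N} J^{(k)}_{i,j} \hat{\sigma}_i^z \hat{\sigma}_j^z,$$ and let $|\Psi_k\rangle$ be the (unique up to phase) ground state of $\hat H_k$. Then $|\Psi_1\rangle$ and $|\Psi_2\rangle$ are not equal (not proportional), i.e. no vector is simultaneously a ground state of $\hat H_1$ and of $\hat H_2$.
   Context: $\hat\sigma_i^x,\hat\sigma_i^z$ are Pauli matrices acting on the $i$-th factor of $(\mathbb{C}^2)^{\otimes N}$. For $\Omega\neq0$ the ground state of such a Hamiltonian is nondegenerate and has nonzero overlap with every computational basis state $|\sigma_1,\dots,\sigma_N\rangle$ (simultaneous eigenstates of all $\hat\sigma_i^z$). *)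

theory Defs
  imports Complex_Main
begin

text \<open>Hilbert space (C^2)^{\<otimes>N} realised as functions on computational basis states.
  A basis state |sigma_1,...,sigma_N> is encoded by the set s \<subseteq> {1..N} of sites i
  with sigma_i^z = -1 (spin down).\<close>

definition qvec :: "nat \<Rightarrow> (nat set \<Rightarrow> complex) set" where
  "qvec N = {\<psi>. \<forall>s. \<not> s \<subseteq> {1..N} \<longrightarrow> \<psi> s = 0}"

text \<open>Eigenvalue of sigma_i^z on basis state s.\<close>
definition zval :: "nat set \<Rightarrow> nat \<Rightarrow> real" where
  "zval s i = (if i \<in> s then -1 else 1)"

text \<open>Spin flip at site i (action of sigma_i^x on basis states).\<close>
definition flip :: "nat \<Rightarrow> nat set \<Rightarrow> nat set" where
  "flip i s = (if i \<in> s then s - {i} else insert i s)"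

text \<open>H = Omega sum_i sigma_i^x + delta sum_i sigma_i^z + sum_{i<j} J i j sigma_i^z sigma_j^z,
  acting on vectors (sigma^x is real symmetric, so (sigma_i^x psi)(s) = psi(flip i s)).\<close>
definition ham :: "nat \<Rightarrow> real \<Rightarrow> real \<Rightarrow> (nat \<Rightarrow> nat \<Rightarrow> real)
                   \<Rightarrow> (nat set \<Rightarrow> complex) \<Rightarrow> (nat set \<Rightarrow> complex)" where
  "ham N \<Omega> \<delta> J \<psi> = (\<lambda>s. if s \<subseteq> {1..N} then
      complex_of_real \<Omega> * (\<Sum>i=1..N. \<psi> (flip i s))
      + complex_of_real (\<delta> * (\<Sum>i=1..N. zval s i)
          + (\<Sum>i=1..N. \<Sum>j=i+1..N. J i j * zval s i * zval s j)) * \<psi> s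
    else 0)"

definition ground_state :: "nat \<Rightarrow> ((nat set \<Rightarrow> complex) \<Rightarrow> (nat set \<Rightarrow> complex))
                            \<Rightarrow> (nat set \<Rightarrow> complex) \<Rightarrow> bool" where
  "ground_state N H \<psi> \<longleftrightarrow> \<psi> \<in> qvec N \<and> \<psi> \<noteq> (\<lambda>_. 0) \<and>
     (\<exists>E::real. H \<psi> = (\<lambda>s. complex_of_real E * \<psi> s) \<and>
        (\<forall>\<phi>\<in>qvec N. \<forall>\<mu>::complex. \<phi> \<noteq> (\<lambda>_. 0) \<and> H \<phi> = (\<lambda>s. \<mu> * \<phi> s) \<longrightarrow> E \<le> Re \<mu>))"

end

theory Submission
  imports Defs "HOL-Analysis.Analysis"
begin

text \<open>Both Hamiltonians share the off-diagonal part \<open>\<Omega> \<Sum>\<^sub>i \<sigma>\<^sub>i\<^sup>x\<close>, which connects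
  neighbouring vertices of the hypercube of basis states. For a ground state \<open>\<psi>\<close> the gauged
  modulus \<open>\<phi>(s) = (-sgn \<Omega>)\<^bsup>|s|\<^esup> |\<psi>(s)|\<close> turns every hopping term non-positive, so its
  Rayleigh quotient is at most the ground energy; by the variational principle \<open>\<phi>\<close> is an
  eigenvector too, and its eigenvalue equation at a zero of \<open>\<psi>\<close> forces \<open>\<psi>\<close> to vanish at
  all neighbours, hence everywhere. So a ground state has no zero component
  (Perron--Frobenius). Subtracting the two eigenvalue equations then shows that the diagonal
  ZZ energy of the coupling difference \<open>J\<^sub>1 - J\<^sub>2\<close> is constant on basis states, and the
  inclusion--exclusion over the states \<open>{}, {a}, {b}, {a,b}\<close> extracts \<open>4 (J\<^sub>1 - J\<^sub>2) a b = 0\<close>.\<close>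

lemma flip_flip [simp]: "flip i (flip i s) = s"
  by (auto simp: flip_def)

lemma flip_subset_iff: "i \<in> {1..N} \<Longrightarrow> flip i s \<subseteq> {1..N} \<longleftrightarrow> s \<subseteq> {1..N}"
  by (auto simp: flip_def)

lemma bij_betw_flip_Pow: "i \<in> {1..N} \<Longrightarrow> bij_betw (flip i) (Pow {1..N}) (Pow {1..N})"
  by (rule bij_betw_byWitness[where f' = "flip i"]) (auto simp: flip_def split: if_splits)

lemma sum_Pow_flip_swap:
  fixes f g :: "nat set \<Rightarrow> 'a :: comm_semiring_0"
  assumes "i \<in> {1..N}"
  shows "(\<Sum>s\<in>Pow {1..N}. g s * f (flip i s)) = (\<Sum>s\<in>Pow {1..N}. g (flip i s) * f s)"
  using sum.reindex_bij_betw[OF bij_betw_flip_Pow[OF assms], of "\<lambda>s. g (flip i s) * f s"] by simp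

lemma power_card_mult_power_card_flip:
  fixes c :: "'a :: comm_monoid_mult"
  assumes "c * c = 1" and "finite s"
  shows "c ^ card s * c ^ card (flip i s) = c"
proof -
  have unit: "c ^ k * c ^ k = 1" for k
    by (metis assms(1) power_mult_distrib power_one)
  show ?thesis
  proof (cases "i \<in> s")
    case True
    then have "card s = Suc (card (flip i s))"
      using assms(2) by (simp add: flip_def) (metis Suc_pred card_gt_0_iff empty_iff)
    then show ?thesis by (metis mult.assoc mult_1_right power_Suc unit)
  next
    case False
    then have "card (flip i s) = Suc (card s)"
      using assms(2) by (simp add: flip_def)
    then show ?thesis by (metis mult.left_commute mult_1_right power_Suc unit)
  qed
qed

lemma flip_closed_holds_everywhere:
  assumes closed: "\<And>s i. s \<subseteq> {1..N} \<Longrightarrow> i \<in> {1..N} \<Longrightarrow> P s \<Longrightarrow> P (flip i s)"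
    and "s\<^sub>0 \<subseteq> {1..N}" "P s\<^sub>0" "t \<subseteq> {1..N}"
  shows "P t"
proof -
  have "P {}" if "finite s" "s \<subseteq> {1..N}" "P s" for s
    using that
  proof (induction s rule: finite_induct)
    case (insert i s)
    then have "P (flip i (insert i s))" by (intro closed) auto
    with insert show ?case by (simp add: flip_def)
  qed
  then have "P {}"
    using \<open>s\<^sub>0 \<subseteq> {1..N}\<close> \<open>P s\<^sub>0\<close> finite_subset by blast
  have "finite t" using \<open>t \<subseteq> {1..N}\<close> finite_subset by blast
  then show "P t" using \<open>t \<subseteq> {1..N}\<close>
  proof (induction t rule: finite_induct)
    case empty
    show ?case by fact
  next
    case (insert i t)
    then have "P (flip i t)" by (intro closed) auto
    with insert show ?case by (simp add: flip_def)
  qed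
qed

lemma quadratic_nonneg_imp_linear_coeff_zero:
  fixes a b :: real
  assumes "\<And>t. 0 \<le> a * t + b * t\<^sup>2"
  shows "a = 0"
proof (rule ccontr)
  assume "a \<noteq> 0"
  define c where "c = \<bar>b\<bar> + 1"
  have "c > 0" by (simp add: c_def)
  have "a * (- a / c) + b * (- a / c)\<^sup>2 = a\<^sup>2 * (b - c) / c\<^sup>2"
    using \<open>c > 0\<close> by (simp add: field_simps power2_eq_square)
  also have "\<dots> < 0"
    using \<open>a \<noteq> 0\<close> \<open>c > 0\<close> by (intro divide_neg_pos mult_pos_neg) (auto simp: c_def)
  finally show False using assms[of "- a / c"] by simp
qed

definition transverse_field_ham ::
    "nat \<Rightarrow> real \<Rightarrow> (nat set \<Rightarrow> real) \<Rightarrow> (nat set \<Rightarrow> complex) \<Rightarrow> nat set \<Rightarrow> complex"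
  where "transverse_field_ham N \<Omega> d \<psi> = (\<lambda>s. if s \<subseteq> {1..N} then
      complex_of_real \<Omega> * (\<Sum>i=1..N. \<psi> (flip i s)) + complex_of_real (d s) * \<psi> s else 0)"

definition zz_energy :: "nat \<Rightarrow> (nat \<Rightarrow> nat \<Rightarrow> real) \<Rightarrow> nat set \<Rightarrow> real"
  where "zz_energy N J s = (\<Sum>i=1..N. \<Sum>j=i+1..N. J i j * zval s i * zval s j)"

definition ising_diag :: "nat \<Rightarrow> real \<Rightarrow> (nat \<Rightarrow> nat \<Rightarrow> real) \<Rightarrow> nat set \<Rightarrow> real"
  where "ising_diag N \<delta> J s = \<delta> * (\<Sum>i=1..N. zval s i) + zz_energy N J s"

lemma ham_eq_transverse_field_ham: "ham N \<Omega> \<delta> J = transverse_field_ham N \<Omega> (ising_diag N \<delta> J)"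
  by (intro ext) (simp add: ham_def transverse_field_ham_def ising_diag_def zz_energy_def)

context
  fixes N :: nat and \<Omega> :: real and d :: "nat set \<Rightarrow> real"
begin

definition ham_re :: "(nat set \<Rightarrow> real) \<Rightarrow> nat set \<Rightarrow> real"
  where "ham_re f s = \<Omega> * (\<Sum>i=1..N. f (flip i s)) + d s * f s"

definition energy :: "(nat set \<Rightarrow> real) \<Rightarrow> real"
  where "energy f = (\<Sum>s\<in>Pow {1..N}. f s * ham_re f s)"

definition norm2 :: "(nat set \<Rightarrow> real) \<Rightarrow> real"
  where "norm2 f = (\<Sum>s\<in>Pow {1..N}. (f s)\<^sup>2)"

lemma ham_re_add_scaled: "ham_re (\<lambda>s. v s + t * w s) s = ham_re v s + t * ham_re w s"
  unfolding ham_re_def by (simp add: sum.distrib sum_distrib_left algebra_simps)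

lemma ham_re_symmetric:
  "(\<Sum>s\<in>Pow {1..N}. g s * ham_re f s) = (\<Sum>s\<in>Pow {1..N}. f s * ham_re g s)"
proof -
  have "(\<Sum>s\<in>Pow {1..N}. g s * (\<Sum>i=1..N. f (flip i s)))
      = (\<Sum>i=1..N. \<Sum>s\<in>Pow {1..N}. g s * f (flip i s))"
    by (simp add: sum_distrib_left) (rule sum.swap)
  also have "\<dots> = (\<Sum>i=1..N. \<Sum>s\<in>Pow {1..N}. g (flip i s) * f s)"
    by (intro sum.cong refl sum_Pow_flip_swap)
  also have "\<dots> = (\<Sum>s\<in>Pow {1..N}. f s * (\<Sum>i=1..N. g (flip i s)))"
    by (simp add: sum_distrib_left mult.commute) (rule sum.swap)
  finally have swap: "(\<Sum>s\<in>Pow {1..N}. g s * (\<Sum>i=1..N. f (flip i s)))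
      = (\<Sum>s\<in>Pow {1..N}. f s * (\<Sum>i=1..N. g (flip i s)))" .
  have "(\<Sum>s\<in>Pow {1..N}. g s * (\<Omega> * (\<Sum>i=1..N. f (flip i s))))
      = \<Omega> * (\<Sum>s\<in>Pow {1..N}. g s * (\<Sum>i=1..N. f (flip i s)))"
    by (simp add: sum_distrib_left mult_ac)
  also have "\<dots> = (\<Sum>s\<in>Pow {1..N}. f s * (\<Omega> * (\<Sum>i=1..N. g (flip i s))))"
    unfolding swap by (simp add: sum_distrib_left mult_ac)
  moreover have "(\<Sum>s\<in>Pow {1..N}. g s * (d s * f s)) = (\<Sum>s\<in>Pow {1..N}. f s * (d s * g s))"
    by (simp add: mult_ac)
  ultimately show ?thesis
    unfolding ham_re_def distrib_left sum.distrib by simp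
qed

lemma energy_add_scaled:
  "energy (\<lambda>s. v s + t * w s)
     = energy v + 2 * t * (\<Sum>s\<in>Pow {1..N}. w s * ham_re v s) + t\<^sup>2 * energy w"
proof -
  have "energy (\<lambda>s. v s + t * w s) = energy v + t * (\<Sum>s\<in>Pow {1..N}. v s * ham_re w s)
      + t * (\<Sum>s\<in>Pow {1..N}. w s * ham_re v s) + t\<^sup>2 * energy w"
    unfolding energy_def ham_re_add_scaled
    by (simp add: sum.distrib sum_distrib_left algebra_simps power2_eq_square)
  then show ?thesis using ham_re_symmetric[of v w] by simp
qed

lemma norm2_add_scaled:
  "norm2 (\<lambda>s. v s + t * w s) = norm2 v + 2 * t * (\<Sum>s\<in>Pow {1..N}. w s * v s) + t\<^sup>2 * norm2 w"
  unfolding norm2_def by (simp add: sum.distrib sum_distrib_left algebra_simps power2_eq_square)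

lemma norm2_nonneg: "0 \<le> norm2 f"
  unfolding norm2_def by (simp add: sum_nonneg)

lemma energy_cong:
  assumes "\<And>s. s \<subseteq> {1..N} \<Longrightarrow> f s = g s"
  shows "energy f = energy g"
proof -
  have "ham_re f s = ham_re g s" if "s \<subseteq> {1..N}" for s
  proof -
    have "(\<Sum>i=1..N. f (flip i s)) = (\<Sum>i=1..N. g (flip i s))"
      using that by (intro sum.cong refl assms) (auto simp: flip_def)
    then show ?thesis unfolding ham_re_def using assms[OF that] by simp
  qed
  then show ?thesis unfolding energy_def by (simp add: assms)
qed

lemma norm2_cong: "(\<And>s. s \<subseteq> {1..N} \<Longrightarrow> f s = g s) \<Longrightarrow> norm2 f = norm2 g"
  unfolding norm2_def by simp

lemma energy_scale: "energy (\<lambda>s. a * f s) = a\<^sup>2 * energy f"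
  unfolding energy_def ham_re_def by (simp add: sum_distrib_left algebra_simps power2_eq_square)

lemma norm2_scale: "norm2 (\<lambda>s. a * f s) = a\<^sup>2 * norm2 f"
  unfolding norm2_def by (simp add: sum_distrib_left algebra_simps power2_eq_square)

lemma norm2_eq_0_iff: "norm2 f = 0 \<longleftrightarrow> (\<forall>s \<subseteq> {1..N}. f s = 0)"
  unfolding norm2_def by (subst sum_nonneg_eq_0_iff) auto

lemma minimizer_is_eigenvector:
  assumes lower: "\<And>w. \<mu> * norm2 w \<le> energy w" and "energy v = \<mu> * norm2 v"
    and "s \<subseteq> {1..N}"
  shows "ham_re v s = \<mu> * v s"
proof -
  define r where "r s = ham_re v s - \<mu> * v s" for s
  have "2 * (\<Sum>s\<in>Pow {1..N}. w s * r s) = 0" for w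
  proof (rule quadratic_nonneg_imp_linear_coeff_zero)
    fix t
    have "0 \<le> energy (\<lambda>s. v s + t * w s) - \<mu> * norm2 (\<lambda>s. v s + t * w s)"
      using lower by simp
    also have "\<dots> = 2 * (\<Sum>s\<in>Pow {1..N}. w s * r s) * t + (energy w - \<mu> * norm2 w) * t\<^sup>2"
      unfolding energy_add_scaled norm2_add_scaled r_def using assms(2)
      by (simp add: algebra_simps sum_subtractf sum_distrib_left)
    finally show "0 \<le> 2 * (\<Sum>s\<in>Pow {1..N}. w s * r s) * t + (energy w - \<mu> * norm2 w) * t\<^sup>2" .
  qed
  then have "norm2 r = 0"
    unfolding norm2_def by (simp add: power2_eq_square)
  then show ?thesis
    using assms(3) by (simp add: norm2_eq_0_iff r_def)
qed

lemma normalize_on_Pow: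
  assumes "norm2 w \<noteq> 0"
  obtains u where "\<And>s. \<not> s \<subseteq> {1..N} \<Longrightarrow> u s = 0" "norm2 u = 1"
    "energy u = energy w / norm2 w"
proof
  define c where "c = 1 / sqrt (norm2 w)"
  have c2: "c\<^sup>2 * norm2 w = 1"
    using assms norm2_nonneg[of w] by (simp add: c_def power_divide)
  define u where "u s = (if s \<subseteq> {1..N} then c * w s else 0)" for s
  show "\<And>s. \<not> s \<subseteq> {1..N} \<Longrightarrow> u s = 0" by (simp add: u_def)
  have u_on_Pow: "u s = c * w s" if "s \<subseteq> {1..N}" for s
    using that by (simp add: u_def)
  show "norm2 u = 1"
    using c2 norm2_cong[OF u_on_Pow] by (simp add: norm2_scale)
  show "energy u = energy w / norm2 w"
    using c2 assms energy_cong[OF u_on_Pow] by (simp add: energy_scale field_simps)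
qed

text \<open>Only bounded boxes are compact in the product topology, hence the search for a minimiser
  on the unit sphere is confined to vectors with entries in \<open>[-1, 1]\<close> vanishing off \<open>Pow {1..N}\<close>.\<close>

lemma exists_energy_minimizer:
  obtains v where "\<And>s. \<not> s \<subseteq> {1..N} \<Longrightarrow> v s = 0" "norm2 v = 1"
    "\<And>w. energy v * norm2 w \<le> energy w"
proof -
  define C where "C s = (if s \<subseteq> {1..N} then {-1..1} else {0::real})" for s
  define K where "K = Pi UNIV C \<inter> {f. norm2 f = 1}"
  have in_K: "u \<in> K" if "\<And>s. \<not> s \<subseteq> {1..N} \<Longrightarrow> u s = 0" "norm2 u = 1" for u
  proof -
    have "u s \<in> C s" for s
    proof (cases "s \<subseteq> {1..N}")
      case True
      have "(u s)\<^sup>2 \<le> norm2 u"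
        unfolding norm2_def using True by (intro member_le_sum) auto
      then show ?thesis
        using \<open>norm2 u = 1\<close> True by (simp add: C_def abs_square_le_1 abs_le_iff)
    qed (simp add: C_def that)
    then show ?thesis using that unfolding K_def by auto
  qed
  have "norm2 (\<lambda>s. if s = {} then 1 else 0) = (\<Sum>s\<in>Pow {1..N}. if s = {} then 1 else 0)"
    unfolding norm2_def by (intro sum.cong) auto
  then have unit_vector_in_K: "(\<lambda>s. if s = {} then 1 else 0) \<in> K"
    by (intro in_K) auto
  have "compactin (product_topology (\<lambda>_. euclidean) UNIV) (PiE UNIV C)"
    by (simp add: compactin_PiE C_def)
  then have "compact (Pi UNIV C)"
    by (metis PiE_UNIV_domain compactin_euclidean_iff euclidean_product_topology)
  moreover have "closed {f. norm2 f = 1}"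
    unfolding norm2_def by (intro closed_Collect_eq continuous_intros) auto
  ultimately have "compact K" unfolding K_def by blast
  moreover have "K \<noteq> {}"
    using unit_vector_in_K by blast
  moreover have "continuous_on K energy"
  proof -
    have "continuous_on K (\<lambda>f. f s)" for s
      by (rule continuous_on_subset[OF continuous_on_product_coordinates]) simp
    then show ?thesis
      unfolding energy_def ham_re_def by (intro continuous_intros)
  qed
  ultimately obtain v where "v \<in> K" and min: "\<And>u. u \<in> K \<Longrightarrow> energy v \<le> energy u"
    using continuous_attains_inf by metis
  show ?thesis
  proof
    show "norm2 v = 1" using \<open>v \<in> K\<close> by (simp add: K_def)
    show "v s = 0" if "\<not> s \<subseteq> {1..N}" for s
    proof -
      have "v s \<in> C s" using \<open>v \<in> K\<close> by (auto simp: K_def)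
      then show ?thesis using that by (simp add: C_def)
    qed
    fix w
    show "energy v * norm2 w \<le> energy w"
    proof (cases "norm2 w = 0")
      case True
      then have "energy w = energy (\<lambda>_. 0)"
        by (intro energy_cong) (simp add: norm2_eq_0_iff)
      with True show ?thesis by (simp add: energy_def ham_re_def)
    next
      case False
      then obtain u where "u \<in> K" "energy u = energy w / norm2 w"
        using in_K by (metis normalize_on_Pow)
      have "energy v * norm2 w \<le> energy u * norm2 w"
        using min[OF \<open>u \<in> K\<close>] norm2_nonneg by (rule mult_right_mono)
      also have "\<dots> = energy w"
        using \<open>energy u = energy w / norm2 w\<close> False by simp
      finally show ?thesis .
    qed
  qed
qed

lemma ham_re_outside:
  assumes "\<And>s. \<not> s \<subseteq> {1..N} \<Longrightarrow> v s = 0" and "\<not> s \<subseteq> {1..N}"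
  shows "ham_re v s = 0"
proof -
  have "v (flip i s) = 0" if "i \<in> {1..N}" for i
    using assms flip_subset_iff[OF that] by blast
  then show ?thesis using assms by (simp add: ham_re_def)
qed

lemma transverse_field_ham_of_real:
  assumes "\<And>s. \<not> s \<subseteq> {1..N} \<Longrightarrow> v s = 0"
  shows "transverse_field_ham N \<Omega> d (\<lambda>s. of_real (v s)) = (\<lambda>s. of_real (ham_re v s))"
proof
  fix s
  show "transverse_field_ham N \<Omega> d (\<lambda>s. of_real (v s)) s = of_real (ham_re v s)"
  proof (cases "s \<subseteq> {1..N}")
    case False
    then show ?thesis using ham_re_outside[of v s] assms by (simp add: transverse_field_ham_def)
  qed (simp add: transverse_field_ham_def ham_re_def)
qed

lemma ground_energy_le_energy:
  assumes ground: "\<forall>\<phi>\<in>qvec N. \<forall>\<mu>. \<phi> \<noteq> (\<lambda>_. 0) \<and>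
      transverse_field_ham N \<Omega> d \<phi> = (\<lambda>s. \<mu> * \<phi> s) \<longrightarrow> E \<le> Re \<mu>"
  shows "E * norm2 f \<le> energy f"
proof -
  obtain v where vanish: "\<And>s. \<not> s \<subseteq> {1..N} \<Longrightarrow> v s = 0" and "norm2 v = 1"
    and min: "\<And>w. energy v * norm2 w \<le> energy w"
    using exists_energy_minimizer by blast
  have "ham_re v s = energy v * v s" for s
    using minimizer_is_eigenvector[OF min] \<open>norm2 v = 1\<close> ham_re_outside[of v s] vanish
    by (cases "s \<subseteq> {1..N}") auto
  moreover have "transverse_field_ham N \<Omega> d (\<lambda>s. of_real (v s)) = (\<lambda>s. of_real (ham_re v s))"
    using vanish by (rule transverse_field_ham_of_real)
  ultimately have "transverse_field_ham N \<Omega> d (\<lambda>s. of_real (v s))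
      = (\<lambda>s. of_real (energy v) * of_real (v s))"
    by simp
  moreover have "(\<lambda>s. complex_of_real (v s)) \<in> qvec N"
    using vanish by (simp add: qvec_def)
  moreover have "(\<lambda>s. complex_of_real (v s)) \<noteq> (\<lambda>_. 0)"
    using \<open>norm2 v = 1\<close> norm2_eq_0_iff[of v] by (auto simp: fun_eq_iff)
  ultimately have "E \<le> energy v"
    using ground by fastforce
  then have "E * norm2 f \<le> energy v * norm2 f"
    using norm2_nonneg by (rule mult_right_mono)
  also have "\<dots> \<le> energy f" by (rule min)
  finally show ?thesis .
qed

definition signed_modulus :: "(nat set \<Rightarrow> complex) \<Rightarrow> nat set \<Rightarrow> real"
  where "signed_modulus \<psi> s = (- sgn \<Omega>) ^ card s * cmod (\<psi> s)"

lemma signed_modulus_flip: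
  assumes "\<Omega> \<noteq> 0" "s \<subseteq> {1..N}"
  shows "signed_modulus \<psi> (flip i s) = - sgn \<Omega> * (- sgn \<Omega>) ^ card s * cmod (\<psi> (flip i s))"
proof -
  have "(- sgn \<Omega>) * (- sgn \<Omega>) = 1" using assms(1) by (simp add: sgn_if)
  moreover have "finite s" using assms(2) finite_subset by blast
  ultimately have "(- sgn \<Omega>) ^ card s * (- sgn \<Omega>) ^ card (flip i s) = - sgn \<Omega>"
    by (rule power_card_mult_power_card_flip)
  moreover have "(- sgn \<Omega>) ^ card s * (- sgn \<Omega>) ^ card s = 1"
    using \<open>(- sgn \<Omega>) * (- sgn \<Omega>) = 1\<close> by (metis power_mult_distrib power_one)
  ultimately have "(- sgn \<Omega>) ^ card (flip i s) = - sgn \<Omega> * (- sgn \<Omega>) ^ card s"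
    by (metis mult.assoc mult.commute mult_1_right)
  then show ?thesis by (simp add: signed_modulus_def)
qed

lemma signed_modulus_energy_le:
  assumes "\<Omega> \<noteq> 0" and eig: "transverse_field_ham N \<Omega> d \<psi> = (\<lambda>s. of_real E * \<psi> s)"
  shows "energy (signed_modulus \<psi>) \<le> E * norm2 (signed_modulus \<psi>)"
  unfolding energy_def norm2_def sum_distrib_left
proof (rule sum_mono)
  fix s assume "s \<in> Pow {1..N}"
  then have s: "s \<subseteq> {1..N}" by simp
  define c where "c = (- sgn \<Omega>) ^ card s"
  have "c * c = 1"
    unfolding c_def using assms(1) by (simp flip: power_mult_distrib add: sgn_if)
  have hopping: "- \<bar>\<Omega>\<bar> * (cmod (\<psi> s) * cmod (\<psi> (flip i s)))
      \<le> \<Omega> * Re (cnj (\<psi> s) * \<psi> (flip i s))" for i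
  proof -
    have "\<bar>Re (cnj (\<psi> s) * \<psi> (flip i s))\<bar> \<le> cmod (\<psi> s) * cmod (\<psi> (flip i s))"
      by (metis abs_Re_le_cmod complex_mod_cnj norm_mult)
    then have "\<bar>\<Omega> * Re (cnj (\<psi> s) * \<psi> (flip i s))\<bar>
        \<le> \<bar>\<Omega>\<bar> * (cmod (\<psi> s) * cmod (\<psi> (flip i s)))"
      unfolding abs_mult by (rule mult_left_mono) simp
    then show ?thesis by linarith
  qed
  have pair: "\<Omega> * (signed_modulus \<psi> s * signed_modulus \<psi> (flip i s))
      = - \<bar>\<Omega>\<bar> * (cmod (\<psi> s) * cmod (\<psi> (flip i s)))" for i
  proof -
    have "\<Omega> * (signed_modulus \<psi> s * signed_modulus \<psi> (flip i s))
        = - (\<Omega> * sgn \<Omega>) * (c * c) * (cmod (\<psi> s) * cmod (\<psi> (flip i s)))"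
      unfolding signed_modulus_flip[OF assms(1) s] by (simp add: signed_modulus_def c_def mult_ac)
    then show ?thesis using \<open>c * c = 1\<close> by (simp add: abs_sgn[of \<Omega>])
  qed
  have square: "(signed_modulus \<psi> s)\<^sup>2 = (cmod (\<psi> s))\<^sup>2"
    using \<open>c * c = 1\<close> by (simp add: signed_modulus_def c_def[symmetric] power2_eq_square mult_ac)
  have "signed_modulus \<psi> s * ham_re (signed_modulus \<psi>) s
      = (\<Sum>i=1..N. - \<bar>\<Omega>\<bar> * (cmod (\<psi> s) * cmod (\<psi> (flip i s)))) + d s * (cmod (\<psi> s))\<^sup>2"
    using square unfolding ham_re_def pair[symmetric]
    by (simp add: sum_distrib_left algebra_simps power2_eq_square)
  also have "\<dots> \<le> \<Omega> * (\<Sum>i=1..N. Re (cnj (\<psi> s) * \<psi> (flip i s))) + d s * (cmod (\<psi> s))\<^sup>2"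
    unfolding sum_distrib_left by (intro add_right_mono sum_mono hopping)
  also have "\<dots> = Re (cnj (\<psi> s) * transverse_field_ham N \<Omega> d \<psi> s)"
    using s by (simp add: transverse_field_ham_def Re_sum sum_distrib_left cmod_power2 algebra_simps)
      (simp add: power2_eq_square)
  also have "\<dots> = E * (signed_modulus \<psi> s)\<^sup>2"
    unfolding square by (simp add: eig cmod_power2 algebra_simps) (simp add: power2_eq_square)
  finally show "signed_modulus \<psi> s * ham_re (signed_modulus \<psi>) s \<le> E * (signed_modulus \<psi> s)\<^sup>2" .
qed

lemma ground_state_nonvanishing:
  assumes "\<Omega> \<noteq> 0" and "ground_state N (transverse_field_ham N \<Omega> d) \<psi>" and "s \<subseteq> {1..N}"
  shows "\<psi> s \<noteq> 0"
proof
  assume "\<psi> s = 0"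
  obtain E where "\<psi> \<in> qvec N" "\<psi> \<noteq> (\<lambda>_. 0)"
    and eig: "transverse_field_ham N \<Omega> d \<psi> = (\<lambda>s. of_real E * \<psi> s)"
    and ground: "\<forall>\<phi>\<in>qvec N. \<forall>\<mu>. \<phi> \<noteq> (\<lambda>_. 0) \<and>
      transverse_field_ham N \<Omega> d \<phi> = (\<lambda>s. \<mu> * \<phi> s) \<longrightarrow> E \<le> Re \<mu>"
    using assms(2) unfolding ground_state_def by blast
  have "energy (signed_modulus \<psi>) = E * norm2 (signed_modulus \<psi>)"
    using signed_modulus_energy_le[OF assms(1) eig] ground_energy_le_energy[OF ground]
    by (simp add: antisym)
  then have eig_re: "ham_re (signed_modulus \<psi>) t = E * signed_modulus \<psi> t" if "t \<subseteq> {1..N}" for t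
    using minimizer_is_eigenvector ground_energy_le_energy[OF ground] that by blast
  have "\<psi> (flip i t) = 0" if "t \<subseteq> {1..N}" "i \<in> {1..N}" "\<psi> t = 0" for t i
  proof -
    have "(\<Sum>j=1..N. signed_modulus \<psi> (flip j t)) = 0"
      using eig_re[OF that(1)] that(3) assms(1) by (simp add: ham_re_def signed_modulus_def)
    moreover have "(\<Sum>j=1..N. signed_modulus \<psi> (flip j t))
        = - sgn \<Omega> * (- sgn \<Omega>) ^ card t * (\<Sum>j=1..N. cmod (\<psi> (flip j t)))"
      by (simp add: signed_modulus_flip[OF assms(1) that(1)] sum_distrib_left)
    ultimately have "(\<Sum>j=1..N. cmod (\<psi> (flip j t))) = 0"
      using assms(1) by (simp add: sgn_if split: if_splits)
    then show ?thesis
      using that(2) by (simp add: sum_nonneg_eq_0_iff)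
  qed
  then have zero_on_Pow: "\<psi> t = 0" if "t \<subseteq> {1..N}" for t
    using flip_closed_holds_everywhere[where P = "\<lambda>t. \<psi> t = 0"] \<open>\<psi> s = 0\<close> assms(3) that by blast
  have "\<psi> = (\<lambda>_. 0)"
  proof
    show "\<psi> t = 0" for t
      using zero_on_Pow \<open>\<psi> \<in> qvec N\<close> by (cases "t \<subseteq> {1..N}") (auto simp: qvec_def)
  qed
  with \<open>\<psi> \<noteq> (\<lambda>_. 0)\<close> show False ..
qed

end

lemma common_eigenvector_diagonal_difference:
  assumes "transverse_field_ham N \<Omega> d\<^sub>1 \<psi> = (\<lambda>s. of_real E\<^sub>1 * \<psi> s)"
    and "transverse_field_ham N \<Omega> d\<^sub>2 \<psi> = (\<lambda>s. of_real E\<^sub>2 * \<psi> s)"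
    and "s \<subseteq> {1..N}" and "\<psi> s \<noteq> 0"
  shows "d\<^sub>1 s - d\<^sub>2 s = E\<^sub>1 - E\<^sub>2"
proof -
  let ?hop = "complex_of_real \<Omega> * (\<Sum>i=1..N. \<psi> (flip i s))"
  have "(?hop + of_real (d\<^sub>1 s) * \<psi> s) - (?hop + of_real (d\<^sub>2 s) * \<psi> s)
      = of_real E\<^sub>1 * \<psi> s - of_real E\<^sub>2 * \<psi> s"
    using fun_cong[OF assms(1), of s] fun_cong[OF assms(2), of s] assms(3)
    by (simp add: transverse_field_ham_def)
  then have "of_real (d\<^sub>1 s - d\<^sub>2 s) * \<psi> s = of_real (E\<^sub>1 - E\<^sub>2) * \<psi> s"
    by (simp add: algebra_simps)
  then have "complex_of_real (d\<^sub>1 s - d\<^sub>2 s) = of_real (E\<^sub>1 - E\<^sub>2)"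
    using assms(4) by simp
  then show ?thesis
    by (simp only: of_real_eq_iff)
qed

lemma ising_diag_diff:
  "ising_diag N \<delta> J\<^sub>1 s - ising_diag N \<delta> J\<^sub>2 s = zz_energy N (\<lambda>i j. J\<^sub>1 i j - J\<^sub>2 i j) s"
  by (simp add: ising_diag_def zz_energy_def sum_subtractf algebra_simps)

lemma zval_inclusion_exclusion:
  assumes "a < b" "i < j"
  shows "zval {} i * zval {} j - zval {a} i * zval {a} j - zval {b} i * zval {b} j
      + zval {a, b} i * zval {a, b} j = (if i = a \<and> j = b then 4 else 0)"
  using assms unfolding zval_def by auto

lemma zz_energy_constant_imp_coupling_zero:
  assumes "\<And>s. s \<subseteq> {1..N} \<Longrightarrow> zz_energy N K s = c" and "1 \<le> a" "a < b" "b \<le> N"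
  shows "K a b = 0"
proof -
  have "0 = zz_energy N K {} - zz_energy N K {a} - zz_energy N K {b} + zz_energy N K {a, b}"
    using assms by simp
  also have "\<dots> = (\<Sum>i=1..N. \<Sum>j=i+1..N. K i j * (zval {} i * zval {} j - zval {a} i * zval {a} j
      - zval {b} i * zval {b} j + zval {a, b} i * zval {a, b} j))"
    unfolding zz_energy_def by (simp add: sum.distrib sum_subtractf algebra_simps)
  also have "\<dots> = (\<Sum>i=1..N. \<Sum>j=i+1..N. if i = a \<and> j = b then 4 * K a b else 0)"
    using \<open>a < b\<close> by (intro sum.cong refl) (simp add: zval_inclusion_exclusion)
  also have "\<dots> = 4 * K a b"
  proof -
    have "(\<Sum>j=i+1..N. if i = a \<and> j = b then 4 * K a b else 0) = (if i = a then 4 * K a b else 0)" for i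
      using \<open>a < b\<close> \<open>b \<le> N\<close> by (cases "i = a") (simp_all add: sum.delta')
    then show ?thesis using \<open>1 \<le> a\<close> \<open>a < b\<close> \<open>b \<le> N\<close> by (simp add: sum.delta')
  qed
  finally show ?thesis by simp
qed

theorem mainTheorem3:
  fixes N :: nat and \<Omega> \<delta> :: real and J1 J2 :: "nat \<Rightarrow> nat \<Rightarrow> real"
  assumes "N \<ge> 2" and "\<Omega> \<noteq> 0"
    and "\<exists>i j. 1 \<le> i \<and> i < j \<and> j \<le> N \<and> J1 i j \<noteq> J2 i j"
  shows "\<not> (\<exists>\<psi>. ground_state N (ham N \<Omega> \<delta> J1) \<psi> \<and> ground_state N (ham N \<Omega> \<delta> J2) \<psi>)"
proof
  assume "\<exists>\<psi>. ground_state N (ham N \<Omega> \<delta> J1) \<psi> \<and> ground_state N (ham N \<Omega> \<delta> J2) \<psi>"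
  then obtain \<psi> where ground1: "ground_state N (transverse_field_ham N \<Omega> (ising_diag N \<delta> J1)) \<psi>"
    and ground2: "ground_state N (transverse_field_ham N \<Omega> (ising_diag N \<delta> J2)) \<psi>"
    by (auto simp: ham_eq_transverse_field_ham)
  obtain E1 E2 where
    eig1: "transverse_field_ham N \<Omega> (ising_diag N \<delta> J1) \<psi> = (\<lambda>s. of_real E1 * \<psi> s)" and
    eig2: "transverse_field_ham N \<Omega> (ising_diag N \<delta> J2) \<psi> = (\<lambda>s. of_real E2 * \<psi> s)"
    using ground1 ground2 unfolding ground_state_def by blast
  have "zz_energy N (\<lambda>i j. J1 i j - J2 i j) s = E1 - E2" if "s \<subseteq> {1..N}" for s
    using common_eigenvector_diagonal_difference[OF eig1 eig2 that
        ground_state_nonvanishing[OF \<open>\<Omega> \<noteq> 0\<close> ground1 that]]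
    by (simp add: ising_diag_diff)
  moreover obtain a b where "1 \<le> a" "a < b" "b \<le> N" "J1 a b \<noteq> J2 a b"
    using assms(3) by blast
  ultimately show False
    using zz_energy_constant_imp_coupling_zero[of N "\<lambda>i j. J1 i j - J2 i j"] by force
qed

end
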